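(* Let $f:\mathbb P(V_F)\dashrightarrow\mathbb P(V_G)$ be a quadro-quadric Cremona transformation with inverse $g$. Let $E_f\subset R_f$ and $E_g\subset R_g$ be projective subspaces. The following are equivalent: \begin{enumerate} \item $E_f$ and $E_g$ are corresponding radical ideals for $f$ and $g$ respectively; \item $df(E_f)\subset E_g$ and $dg(E_g)\subset E_f$. \end{enumerate}
   Context: $V_F$ and $V_G$ are $n$-dimensional vector spaces. $F:V_F\to V_G$ and $G:V_G\to V_F$ are quadratic lifts of $f$ and $g$, with cubic forms $N,M$ such that $G(F(x))=N(x)x$ and $F(G(y))=M(y)y$. Put $j_f=F/N:V_F\dashrightarrow V_G$ and $j_g=G/M$. The radical of $f$ is $R_f=V(d^2N)\subset\mathbb P(V_F)$, and similarly $R_g=V(d^2M)$. For a projective subspace $A_f$ denote by $A_F$ its affine cone. A pair of projective subspaces $(I_f,I_g)$ is an ideal (and $I_f,I_g$ are called corresponding ideals) if, for generic $x\in V_F$ and $y\in V_G$, \[ j_f(x+I_F)-j_f(x)\subset I_G\quad\text{and}\quad j_g(y+I_G)-j_g(y)\subset I_F. \] It is radical if $I_f\subset R_f$ (equivalently $I_g\subset R_g$). For a projective subspace $E_f\subset\mathbb P(V_F)$, $df(E_f)$ is the projectivization of the span of $\{F(x+e)-F(x)-F(e): x\in V_F,\ e\in E_F\}$ (empty if this is $0$); $dg$ is defined similarly. *)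

theory Defs
  imports "HOL-Analysis.Analysis"
begin

text \<open>Vector spaces V_F, V_G are modelled as complex^'n (same finite index type, so
  both have dimension n = CARD('n)). Projective subspaces are represented by their
  affine cones, i.e. complex linear subspaces (vec.subspace); the empty projective
  subspace corresponds to the zero subspace.\<close>

type_synonym 'n cvec = "complex ^ 'n"

definition quadratic_map :: "('n::finite cvec \<Rightarrow> 'n cvec) \<Rightarrow> bool" where
  "quadratic_map F \<longleftrightarrow> (\<exists>c :: 'n \<Rightarrow> 'n \<Rightarrow> 'n \<Rightarrow> complex.
     \<forall>x. F x = (\<chi> i. \<Sum>j\<in>UNIV. \<Sum>k\<in>UNIV. c i j k * x$j * x$k))"

definition cubic_form :: "('n::finite cvec \<Rightarrow> complex) \<Rightarrow> bool" where
  "cubic_form N \<longleftrightarrow> (\<exists>c :: 'n \<Rightarrow> 'n \<Rightarrow> 'n \<Rightarrow> complex.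
     \<forall>x. N x = (\<Sum>i\<in>UNIV. \<Sum>j\<in>UNIV. \<Sum>k\<in>UNIV. c i j k * x$i * x$j * x$k))"

text \<open>The components of the quadratic map F have no non-constant common factor
  (so that F is a genuine lift of a degree 2 map): no common linear factor and no
  common quadratic factor.\<close>
definition no_common_factor :: "('n::finite cvec \<Rightarrow> 'n cvec) \<Rightarrow> bool" where
  "no_common_factor F \<longleftrightarrow>
     \<not> (\<exists>(a::'n cvec) (B::complex^'n^'n). a \<noteq> 0 \<and>
            (\<forall>x. F x = (\<Sum>i\<in>UNIV. a$i * x$i) *s (B *v x))) \<and>
     \<not> (\<exists>(d::'n cvec \<Rightarrow> complex) (v::'n cvec). v \<noteq> 0 \<and> (\<forall>x. F x = d x *s v))"

text \<open>Quadro-quadric Cremona transformation f with inverse g, given by quadratic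
  lifts F, G and cubic forms N, M with G(F x) = N(x) x and F(G y) = M(y) y.\<close>
definition quadro_quadric_cremona ::
  "('n::finite cvec \<Rightarrow> 'n cvec) \<Rightarrow> ('n cvec \<Rightarrow> 'n cvec) \<Rightarrow>
   ('n cvec \<Rightarrow> complex) \<Rightarrow> ('n cvec \<Rightarrow> complex) \<Rightarrow> bool" where
  "quadro_quadric_cremona F G N M \<longleftrightarrow>
     quadratic_map F \<and> quadratic_map G \<and> cubic_form N \<and> cubic_form M \<and>
     no_common_factor F \<and> no_common_factor G \<and>
     (\<exists>x. N x \<noteq> 0) \<and> (\<exists>y. M y \<noteq> 0) \<and>
     (\<forall>x. G (F x) = N x *s x) \<and> (\<forall>y. F (G y) = M y *s y)"

inductive_set poly_fun :: "('n::finite cvec \<Rightarrow> complex) set" where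
  const: "(\<lambda>x. c) \<in> poly_fun"
| coord: "(\<lambda>x. x $ i) \<in> poly_fun"
| add: "p \<in> poly_fun \<Longrightarrow> q \<in> poly_fun \<Longrightarrow> (\<lambda>x. p x + q x) \<in> poly_fun"
| mult: "p \<in> poly_fun \<Longrightarrow> q \<in> poly_fun \<Longrightarrow> (\<lambda>x. p x * q x) \<in> poly_fun"

definition generic :: "('n::finite cvec \<Rightarrow> bool) \<Rightarrow> bool" where
  "generic P \<longleftrightarrow> (\<exists>p\<in>poly_fun. (\<exists>x. p x \<noteq> 0) \<and> (\<forall>x. p x \<noteq> 0 \<longrightarrow> P x))"

text \<open>Second differential of a cubic form N at x, in directions h, k (up to the
  irrelevant factor 6): the full polarization of N.\<close>
definition d2 :: "('n::finite cvec \<Rightarrow> complex) \<Rightarrow> 'n cvec \<Rightarrow> 'n cvec \<Rightarrow> 'n cvec \<Rightarrow> complex" where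
  "d2 N x h k = N (x + h + k) - N (x + h) - N (x + k) - N (h + k) + N x + N h + N k"

text \<open>Affine cone of the radical R_f = V(d^2 N).\<close>
definition radical_cone :: "('n::finite cvec \<Rightarrow> complex) \<Rightarrow> 'n cvec set" where
  "radical_cone N = {x. \<forall>h k. d2 N x h k = 0}"

definition jmap :: "('n::finite cvec \<Rightarrow> 'n cvec) \<Rightarrow> ('n cvec \<Rightarrow> complex) \<Rightarrow> 'n cvec \<Rightarrow> 'n cvec" where
  "jmap F N x = inverse (N x) *s F x"

definition ideal_cond ::
  "('n::finite cvec \<Rightarrow> 'n cvec) \<Rightarrow> ('n cvec \<Rightarrow> complex) \<Rightarrow> 'n cvec set \<Rightarrow> 'n cvec set \<Rightarrow> bool" where
  "ideal_cond F N I J \<longleftrightarrow>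
     generic (\<lambda>x. \<forall>e\<in>I. N x \<noteq> 0 \<longrightarrow> N (x + e) \<noteq> 0 \<longrightarrow> jmap F N (x + e) - jmap F N x \<in> J)"

definition is_ideal_pair ::
  "('n::finite cvec \<Rightarrow> 'n cvec) \<Rightarrow> ('n cvec \<Rightarrow> 'n cvec) \<Rightarrow>
   ('n cvec \<Rightarrow> complex) \<Rightarrow> ('n cvec \<Rightarrow> complex) \<Rightarrow> 'n cvec set \<Rightarrow> 'n cvec set \<Rightarrow> bool" where
  "is_ideal_pair F G N M IF IG \<longleftrightarrow>
     vec.subspace IF \<and> vec.subspace IG \<and> ideal_cond F N IF IG \<and> ideal_cond G M IG IF"

definition is_radical_ideal_pair ::
  "('n::finite cvec \<Rightarrow> 'n cvec) \<Rightarrow> ('n cvec \<Rightarrow> 'n cvec) \<Rightarrow>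
   ('n cvec \<Rightarrow> complex) \<Rightarrow> ('n cvec \<Rightarrow> complex) \<Rightarrow> 'n cvec set \<Rightarrow> 'n cvec set \<Rightarrow> bool" where
  "is_radical_ideal_pair F G N M IF IG \<longleftrightarrow>
     is_ideal_pair F G N M IF IG \<and> IF \<subseteq> radical_cone N \<and> IG \<subseteq> radical_cone M"

text \<open>Affine cone of df(E_f): span of F(x+e) - F(x) - F(e).\<close>
definition dcone :: "('n::finite cvec \<Rightarrow> 'n cvec) \<Rightarrow> 'n cvec set \<Rightarrow> 'n cvec set" where
  "dcone F E = vec.span {F (x + e) - F x - F e | x e. e \<in> E}"

end

theory Submission imports Defs begin

text \<open>Along the radical a cubic form is translation invariant, N(x + e) = N(x), so
  j(x + e) - j(x) = (F(x + e) - F(x)) / N(x). For a quadratic map,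
  F(x + e) - F(x) = B(x, e) + F(e) with B the polarization, which is affine in x.
  An affine map that lands in a subspace on a non-empty Zariski open set lands in it
  everywhere; evaluating at x = 0 separates F(e) from B(x, e), and both lie in the
  target subspace exactly when the span of the B(x, e) does, since F(e) = B(e, e)/2.\<close>

lemma quadratic_map_scale:
  assumes "quadratic_map F"
  shows "F (a *s x) = (a * a) *s F x"
proof -
  obtain c where F: "\<And>x. F x = (\<chi> i. \<Sum>j\<in>UNIV. \<Sum>k\<in>UNIV. c i j k * x$j * x$k)"
    using assms unfolding quadratic_map_def by blast
  have "(\<Sum>j\<in>UNIV. \<Sum>k\<in>UNIV. c i j k * (a * x $ j) * (a * x $ k)) =
         a * a * (\<Sum>j\<in>UNIV. \<Sum>k\<in>UNIV. c i j k * x $ j * x $ k)" for i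
    unfolding sum_distrib_left by (intro sum.cong refl) (simp add: algebra_simps)
  then show ?thesis unfolding vec_eq_iff by (simp add: F)
qed

lemma quadratic_map_zero: "quadratic_map F \<Longrightarrow> F 0 = 0"
  using quadratic_map_scale[of F 0 0] by simp

lemma quadratic_map_eq_half_polar:
  assumes "quadratic_map F"
  shows "F e = (1/2) *s (F (e + e) - F e - F e)"
proof -
  have "e + e = (2::complex) *s e" by (simp add: vec_eq_iff)
  then have "F (e + e) = 4 *s F e" using quadratic_map_scale[OF assms, of 2 e] by simp
  then show ?thesis by (simp add: vec_eq_iff)
qed

lemma quadratic_map_polar_affine:
  assumes "quadratic_map F"
  shows "F (x + t *s w + e) - F (x + t *s w) = F (x + e) - F x + t *s (F (w + e) - F w - F e)"
proof -
  obtain c where F: "\<And>x. F x = (\<chi> i. \<Sum>j\<in>UNIV. \<Sum>k\<in>UNIV. c i j k * x$j * x$k)"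
    using assms unfolding quadratic_map_def by blast
  show ?thesis
    unfolding vec_eq_iff
    by (simp add: F sum_subtractf[symmetric] sum.distrib[symmetric] sum_distrib_left)
      (intro allI sum.cong refl, simp add: algebra_simps)
qed

lemma cubic_form_taylor:
  assumes "cubic_form N"
  shows "6 * (N (x + e) - N x) = 3 * d2 N e x x + 3 * d2 N e e x + d2 N e e e"
proof -
  obtain c where N: "\<And>x. N x = (\<Sum>i\<in>UNIV. \<Sum>j\<in>UNIV. \<Sum>k\<in>UNIV. c i j k * x$i * x$j * x$k)"
    using assms unfolding cubic_form_def by blast
  show ?thesis
    unfolding d2_def
    by (simp add: N sum_subtractf[symmetric] sum.distrib[symmetric] sum_distrib_left)
      (intro sum.cong refl, simp add: algebra_simps)
qed

lemma cubic_form_translate_radical: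
  assumes "cubic_form N" "e \<in> radical_cone N"
  shows "N (x + e) = N x"
  using cubic_form_taylor[OF assms(1), of x e] assms(2) unfolding radical_cone_def by simp

lemma poly_fun_sum:
  "finite A \<Longrightarrow> (\<And>a. a \<in> A \<Longrightarrow> f a \<in> poly_fun) \<Longrightarrow> (\<lambda>x. \<Sum>a\<in>A. f a x) \<in> poly_fun"
proof (induction A rule: finite_induct)
  case empty
  then show ?case using poly_fun.const[of 0] by simp
next
  case (insert a A)
  then show ?case using poly_fun.add[of "f a" "\<lambda>x. \<Sum>a\<in>A. f a x"] by simp
qed

lemma cubic_form_poly_fun:
  assumes "cubic_form N"
  shows "N \<in> poly_fun"
proof -
  obtain c where "N = (\<lambda>x. \<Sum>i\<in>UNIV. \<Sum>j\<in>UNIV. \<Sum>k\<in>UNIV. c i j k * x$i * x$j * x$k)"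
    using assms unfolding cubic_form_def by blast
  then show ?thesis
    by (simp, intro poly_fun_sum poly_fun.mult poly_fun.const poly_fun.coord) auto
qed

lemma poly_fun_on_line: "p \<in> poly_fun \<Longrightarrow> \<exists>q. \<forall>t. p (a + t *s w) = poly q t"
proof (induction p rule: poly_fun.induct)
  case (const c)
  then show ?case by (intro exI[of _ "[:c:]"]) simp
next
  case (coord i)
  then show ?case by (intro exI[of _ "[:a$i, w$i:]"]) (simp add: algebra_simps)
next
  case (add p q)
  then obtain q1 q2 where "\<forall>t. p (a + t *s w) = poly q1 t" "\<forall>t. q (a + t *s w) = poly q2 t"
    by blast
  then show ?case by (intro exI[of _ "q1 + q2"]) simp
next
  case (mult p q)
  then obtain q1 q2 where "\<forall>t. p (a + t *s w) = poly q1 t" "\<forall>t. q (a + t *s w) = poly q2 t"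
    by blast
  then show ?case by (intro exI[of _ "q1 * q2"]) simp
qed

lemma poly_fun_zeros_on_line_finite:
  assumes "p \<in> poly_fun" "p (a + s *s w) \<noteq> 0"
  shows "finite {t. p (a + t *s w) = 0}"
proof -
  obtain q where q: "\<And>t. p (a + t *s w) = poly q t"
    using poly_fun_on_line[OF assms(1)] by blast
  have "q \<noteq> 0" using assms(2) q[of s] by auto
  then show ?thesis using poly_roots_finite[of q] by (simp add: q)
qed

text \<open>Non-empty Zariski open sets meet: restrict both polynomials to the line through
  the two given points.\<close>
lemma poly_fun_common_nonzero:
  assumes "p \<in> poly_fun" "p a \<noteq> 0" "q \<in> poly_fun" "q b \<noteq> 0"
  shows "\<exists>y. p y \<noteq> 0 \<and> q y \<noteq> 0"
proof -
  have "finite {t. p (a + t *s (b - a)) = 0}"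
    by (rule poly_fun_zeros_on_line_finite[OF assms(1), of a 0]) (use assms(2) in simp)
  moreover have "finite {t. q (a + t *s (b - a)) = 0}"
    by (rule poly_fun_zeros_on_line_finite[OF assms(3), of a 1]) (use assms(4) in simp)
  ultimately have "finite ({t. p (a + t *s (b - a)) = 0} \<union> {t. q (a + t *s (b - a)) = 0})"
    by simp
  then obtain t where "t \<notin> {t. p (a + t *s (b - a)) = 0} \<union> {t. q (a + t *s (b - a)) = 0}"
    using ex_new_if_finite[OF infinite_UNIV_char_0] by blast
  then show ?thesis by blast
qed

lemma affine_in_subspace_from_zariski_open:
  assumes R: "R \<in> poly_fun" "R y \<noteq> 0" and S: "vec.subspace S"
    and on_open: "\<And>x. R x \<noteq> 0 \<Longrightarrow> A x \<in> S"
    and affine: "\<And>x w t. A (x + t *s w) = A x + t *s L w"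
  shows "A z \<in> S"
proof -
  have "finite {t. R (y + t *s (z - y)) = 0}"
    by (rule poly_fun_zeros_on_line_finite[OF R(1), of y 0]) (use R(2) in simp)
  then have "finite ({t. R (y + t *s (z - y)) = 0} \<union> {0})" by simp
  then obtain t where t: "R (y + t *s (z - y)) \<noteq> 0" "t \<noteq> 0"
    using ex_new_if_finite[OF infinite_UNIV_char_0] by blast
  have Ay: "A y \<in> S" using on_open R(2) .
  have "A (y + t *s (z - y)) \<in> S" using on_open[OF t(1)] .
  then have "A y + t *s L (z - y) \<in> S" by (simp only: affine)
  then have "t *s L (z - y) \<in> S" using Ay S vec.subspace_diff by fastforce
  then have "inverse t *s (t *s L (z - y)) \<in> S" using S vec.subspace_scale by blast
  then have "L (z - y) \<in> S" using t(2) by (simp add: vector_smult_assoc)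
  then have "A y + 1 *s L (z - y) \<in> S" using Ay S vec.subspace_add by fastforce
  then show ?thesis using affine[of y 1 "z - y"] by simp
qed

lemma jmap_translate_radical:
  assumes "cubic_form N" "e \<in> radical_cone N"
  shows "jmap F N (x + e) - jmap F N x = inverse (N x) *s (F (x + e) - F x)"
  unfolding jmap_def cubic_form_translate_radical[OF assms]
  by (simp add: vector_ssub_ldistrib)

lemma dcone_subset_if_ideal_cond:
  assumes F: "quadratic_map F" and N: "cubic_form N" "\<exists>x. N x \<noteq> 0"
    and EF: "EF \<subseteq> radical_cone N" and EG: "vec.subspace EG"
    and ideal: "ideal_cond F N EF EG"
  shows "dcone F EF \<subseteq> EG"
proof -
  obtain r where r: "r \<in> poly_fun" "\<exists>x. r x \<noteq> 0"
    and r_open: "\<And>x. r x \<noteq> 0 \<Longrightarrow> \<forall>e\<in>EF. N x \<noteq> 0 \<longrightarrow> N (x + e) \<noteq> 0 \<longrightarrow>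
                   jmap F N (x + e) - jmap F N x \<in> EG"
    using ideal unfolding ideal_cond_def generic_def by blast
  obtain y where y: "r y \<noteq> 0" "N y \<noteq> 0"
    using poly_fun_common_nonzero[OF r(1) _ cubic_form_poly_fun[OF N(1)]] r(2) N(2) by blast
  have increment: "F (z + e) - F z \<in> EG" if e: "e \<in> EF" for z e
  proof (rule affine_in_subspace_from_zariski_open[where R = "\<lambda>x. r x * N x"
        and A = "\<lambda>x. F (x + e) - F x" and L = "\<lambda>w. F (w + e) - F w - F e"])
    show "(\<lambda>x. r x * N x) \<in> poly_fun"
      by (rule poly_fun.mult[OF r(1) cubic_form_poly_fun[OF N(1)]])
    show "r y * N y \<noteq> 0" using y by simp
    have e_rad: "e \<in> radical_cone N" using EF e by blast
    fix x assume "r x * N x \<noteq> 0"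
    then have "N x \<noteq> 0" and "r x \<noteq> 0" by auto
    moreover have "N (x + e) \<noteq> 0"
      using \<open>N x \<noteq> 0\<close> cubic_form_translate_radical[OF N(1) e_rad] by simp
    ultimately have "jmap F N (x + e) - jmap F N x \<in> EG" using r_open e by blast
    then have "inverse (N x) *s (F (x + e) - F x) \<in> EG"
      by (simp only: jmap_translate_radical[OF N(1) e_rad])
    then have "N x *s (inverse (N x) *s (F (x + e) - F x)) \<in> EG"
      using EG vec.subspace_scale by blast
    with \<open>N x \<noteq> 0\<close> show "F (x + e) - F x \<in> EG" by (simp add: vector_smult_assoc)
  qed (fact EG, fact quadratic_map_polar_affine[OF F])
  have "F (x + e) - F x - F e \<in> EG" if "e \<in> EF" for x e
  proof -
    have "F e \<in> EG" using increment[OF that, of 0] by (simp add: quadratic_map_zero[OF F])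
    then show ?thesis using increment[OF that, of x] EG vec.subspace_diff by blast
  qed
  then have "{F (x + e) - F x - F e | x e. e \<in> EF} \<subseteq> EG" by blast
  then show ?thesis unfolding dcone_def using EG by (rule vec.span_minimal)
qed

lemma ideal_cond_if_dcone_subset:
  assumes F: "quadratic_map F" and N: "cubic_form N" "\<exists>x. N x \<noteq> 0"
    and EF: "EF \<subseteq> radical_cone N" and EG: "vec.subspace EG"
    and dcone: "dcone F EF \<subseteq> EG"
  shows "ideal_cond F N EF EG"
  unfolding ideal_cond_def generic_def
proof (intro bexI[OF _ cubic_form_poly_fun[OF N(1)]] conjI N(2) allI impI ballI)
  fix x e assume "e \<in> EF"
  have polar: "F (z + e) - F z - F e \<in> EG" for z
    using dcone \<open>e \<in> EF\<close> unfolding dcone_def by (blast intro: vec.span_base)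
  have "(1/2) *s (F (e + e) - F e - F e) \<in> EG"
    using polar[of e] EG vec.subspace_scale by blast
  then have "F e \<in> EG" by (simp only: quadratic_map_eq_half_polar[OF F, of e, symmetric])
  then have "F (x + e) - F x \<in> EG"
    using vec.subspace_add[OF EG polar[of x] \<open>F e \<in> EG\<close>] by simp
  then have "inverse (N x) *s (F (x + e) - F x) \<in> EG" using EG vec.subspace_scale by blast
  then show "jmap F N (x + e) - jmap F N x \<in> EG"
    using jmap_translate_radical[OF N(1)] EF \<open>e \<in> EF\<close> by (metis subsetD)
qed

theorem proposition5p12:
  fixes F G :: "'n::finite cvec \<Rightarrow> 'n cvec"
    and N M :: "'n cvec \<Rightarrow> complex"
    and EF EG :: "'n cvec set"
  assumes "quadro_quadric_cremona F G N M"
    and "vec.subspace EF" and "vec.subspace EG"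
    and "EF \<subseteq> radical_cone N" and "EG \<subseteq> radical_cone M"
  shows "is_radical_ideal_pair F G N M EF EG \<longleftrightarrow> (dcone F EF \<subseteq> EG \<and> dcone G EG \<subseteq> EF)"
proof -
  from assms(1) have F: "quadratic_map F" "cubic_form N" "\<exists>x. N x \<noteq> 0"
    and G: "quadratic_map G" "cubic_form M" "\<exists>y. M y \<noteq> 0"
    unfolding quadro_quadric_cremona_def by auto
  show ?thesis
    using dcone_subset_if_ideal_cond[OF F assms(4,3)] ideal_cond_if_dcone_subset[OF F assms(4,3)]
      dcone_subset_if_ideal_cond[OF G assms(5,2)] ideal_cond_if_dcone_subset[OF G assms(5,2)]
    unfolding is_radical_ideal_pair_def is_ideal_pair_def using assms(2-5) by blast
qed

end
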